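(* Let $(X,d)$ be a bounded metric space and let $M: X\to\mathbb{R}$ satisfy $d(x,y)\le M(x)\le d(x,z)+M(z)$ for all $x,y,z\in X$. Let $d_S$ be the subset distance on $\mathcal{F}(X)$ defined in the context. Suppose $X_1,X_2\in\mathcal{F}(X)$ with $|X_1|\le|X_2|$. Then for any $b\in X$, $d_S(X_1,X_2)\le d_S(X_1,X_2\cup\{b\})$.
   Context: $\mathcal{F}(X)$ denotes the set of all finite subsets of $X$. For $A,B\in\mathcal{F}(X)$ with $|A|\le|B|$ and an injection $\chi:A\to B$, define $d_\chi(A,B)=\sum_{x\in A} d(x,\chi(x))+\sum_{y\in B\setminus\chi(A)} M(y)$. The subset distance is $d_S(A,B)=d_S(B,A)=\min\{d_\chi(A,B) : \chi:A\to B \text{ an injection}\}$ (for $|A|\le|B|$). *)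

theory Defs
  imports "HOL-Analysis.Analysis"
begin

definition inj_cost :: "('a \<Rightarrow> 'a \<Rightarrow> real) \<Rightarrow> ('a \<Rightarrow> real) \<Rightarrow> 'a set \<Rightarrow> 'a set \<Rightarrow> ('a \<Rightarrow> 'a) \<Rightarrow> real" where
  "inj_cost d M A B chi = (\<Sum>x\<in>A. d x (chi x)) + (\<Sum>y\<in>B - chi ` A. M y)"

definition subset_dist :: "('a \<Rightarrow> 'a \<Rightarrow> real) \<Rightarrow> ('a \<Rightarrow> real) \<Rightarrow> 'a set \<Rightarrow> 'a set \<Rightarrow> real" where
  "subset_dist d M A B =
     (if card A \<le> card B
      then Min {inj_cost d M A B chi | chi. inj_on chi A \<and> chi ` A \<subseteq> B}
      else Min {inj_cost d M B A chi | chi. inj_on chi B \<and> chi ` B \<subseteq> A})"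

end

theory Submission
  imports Defs "HOL-Library.FuncSet"
begin

text \<open>
  Take an optimal injection \<open>\<chi>\<close> of \<open>X\<^sub>1\<close> into \<open>X\<^sub>2 \<union> {b}\<close>. If \<open>b\<close> is not hit, \<open>\<chi>\<close> is also an
  injection into \<open>X\<^sub>2\<close> and dropping \<open>b\<close> saves \<open>M b \<ge> d b b = 0\<close>. If \<open>\<chi> a = b\<close>, then since
  \<open>|X\<^sub>1| \<le> |X\<^sub>2|\<close> some \<open>y \<in> X\<^sub>2\<close> is not hit; rerouting \<open>a\<close> to \<open>y\<close> replaces \<open>d a b + M y\<close> by
  \<open>d a y \<le> d a b + d b y \<le> d a b + M y\<close>.
\<close>

lemma finite_inj_costs:
  assumes "finite A" "finite B"
  shows "finite {inj_cost d M A B chi | chi. inj_on chi A \<and> chi ` A \<subseteq> B}"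
proof -
  have cost_restrict: "inj_cost d M A B chi = inj_cost d M A B (restrict chi A)" for chi
    unfolding inj_cost_def by simp
  have "{inj_cost d M A B chi | chi. inj_on chi A \<and> chi ` A \<subseteq> B}
        \<subseteq> inj_cost d M A B ` (A \<rightarrow>\<^sub>E B)"
  proof (rule subsetI, elim CollectE exE conjE)
    fix c chi
    assume "c = inj_cost d M A B chi" "chi ` A \<subseteq> B"
    then show "c \<in> inj_cost d M A B ` (A \<rightarrow>\<^sub>E B)"
      using cost_restrict by (intro image_eqI[of _ _ "restrict chi A"]) auto
  qed
  moreover have "finite (A \<rightarrow>\<^sub>E B)"
    using assms by (simp add: finite_PiE)
  ultimately show ?thesis
    using finite_subset by blast
qed

lemma subset_dist_le_inj_cost:
  assumes "finite A" "finite B" "card A \<le> card B" "inj_on chi A" "chi ` A \<subseteq> B"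
  shows "subset_dist d M A B \<le> inj_cost d M A B chi"
  unfolding subset_dist_def using assms
  by (auto intro!: Min_le finite_inj_costs)

lemma subset_dist_attained:
  assumes "finite A" "finite B" "card A \<le> card B"
  obtains chi where "inj_on chi A" "chi ` A \<subseteq> B" "subset_dist d M A B = inj_cost d M A B chi"
proof -
  let ?S = "{inj_cost d M A B chi | chi. inj_on chi A \<and> chi ` A \<subseteq> B}"
  obtain f where "inj_on f A" "f ` A \<subseteq> B"
    using card_le_inj[OF assms] by blast
  then have "?S \<noteq> {}" by blast
  then have "Min ?S \<in> ?S"
    using Min_in finite_inj_costs[OF assms(1,2)] by blast
  moreover have "subset_dist d M A B = Min ?S"
    using assms(3) unfolding subset_dist_def by simp
  ultimately show ?thesis
    using that by auto
qed

lemma inj_cost_insert_unused: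
  assumes "finite B" "b \<notin> B" "b \<notin> chi ` A"
  shows "inj_cost d M A (insert b B) chi = M b + inj_cost d M A B chi"
proof -
  have "insert b B - chi ` A = insert b (B - chi ` A)"
    using assms(3) by blast
  then show ?thesis
    unfolding inj_cost_def using assms(1,2) by simp
qed

lemma inj_cost_reroute:
  assumes "finite A" "finite B" "a \<in> A" "chi a = b" "b \<notin> B" "y \<in> B" "y \<notin> chi ` A"
  shows "inj_cost d M A B (chi(a := y)) + d a b + M y = inj_cost d M A (insert b B) chi + d a y"
proof -
  have "(\<Sum>x\<in>A. d x ((chi(a := y)) x)) = d a y + (\<Sum>x\<in>A - {a}. d x (chi x))"
    using sum.remove[OF assms(1,3), of "\<lambda>x. d x ((chi(a := y)) x)"] by simp
  moreover have "(\<Sum>x\<in>A. d x (chi x)) = d a b + (\<Sum>x\<in>A - {a}. d x (chi x))"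
    using sum.remove[OF assms(1,3), of "\<lambda>x. d x (chi x)"] assms(4) by simp
  moreover have "B - (chi(a := y)) ` A = (B - chi ` A) - {y}"
    using assms(3-5) by (auto simp: fun_upd_image)
  moreover have "insert b B - chi ` A = B - chi ` A"
    using assms(3,4) by blast
  moreover have "(\<Sum>z\<in>B - chi ` A. M z) = M y + (\<Sum>z\<in>(B - chi ` A) - {y}. M z)"
    using assms(2,6,7) by (intro sum.remove) auto
  ultimately show ?thesis
    unfolding inj_cost_def by simp
qed

lemma ex_target_not_hit:
  assumes "finite A" "finite B" "card A \<le> card B" "inj_on chi A" "b \<in> chi ` A" "b \<notin> B"
  shows "\<exists>y\<in>B. y \<notin> chi ` A"
proof (rule ccontr)
  assume "\<not> ?thesis"
  then have "B \<subseteq> chi ` A - {b}"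
    using assms(6) by blast
  then have "card B \<le> card (chi ` A - {b})"
    using assms(1) by (intro card_mono) auto
  also have "\<dots> = card A - 1"
    using assms(4,5) by (simp add: card_image)
  finally have "card B \<le> card A - 1" .
  moreover have "card A > 0"
    using assms(1,5) by (auto simp: card_gt_0_iff)
  ultimately show False
    using assms(3) by linarith
qed

lemma ex_inj_cost_le_insert:
  assumes "finite A" "finite B" "card A \<le> card B" "b \<notin> B"
    and "M b \<ge> 0" and reroute_le: "\<And>a y. a \<in> A \<Longrightarrow> y \<in> B \<Longrightarrow> d a y \<le> d a b + M y"
    and chi: "inj_on chi A" "chi ` A \<subseteq> insert b B"
  obtains chi' where "inj_on chi' A" "chi' ` A \<subseteq> B"
    "inj_cost d M A B chi' \<le> inj_cost d M A (insert b B) chi"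
proof (cases "b \<in> chi ` A")
  case False
  then have "chi ` A \<subseteq> B"
    using chi(2) by blast
  moreover have "inj_cost d M A B chi \<le> inj_cost d M A (insert b B) chi"
    using inj_cost_insert_unused[OF assms(2,4) False] assms(5) by simp
  ultimately show ?thesis
    using that chi(1) by blast
next
  case True
  then obtain a where a: "a \<in> A" "chi a = b"
    by blast
  obtain y where y: "y \<in> B" "y \<notin> chi ` A"
    using ex_target_not_hit[OF assms(1-3) chi(1) True assms(4)] by blast
  have "inj_on (chi(a := y)) A"
    using inj_on_fun_updI[OF chi(1) y(2)] .
  moreover have "(chi(a := y)) ` A \<subseteq> B"
    using chi a y(1) assms(4) by (auto simp: fun_upd_image inj_on_def)
  moreover have "inj_cost d M A B (chi(a := y)) \<le> inj_cost d M A (insert b B) chi"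
    using inj_cost_reroute[OF assms(1,2) a assms(4) y, of d M] reroute_le[OF a(1) y(1)] by simp
  ultimately show ?thesis
    using that by blast
qed

lemma subset_dist_le_insert:
  assumes "finite A" "finite B" "card A \<le> card B"
    and "M b \<ge> 0" "\<And>a y. a \<in> A \<Longrightarrow> y \<in> B \<Longrightarrow> d a y \<le> d a b + M y"
  shows "subset_dist d M A B \<le> subset_dist d M A (insert b B)"
proof (cases "b \<in> B")
  case True
  then show ?thesis by (simp add: insert_absorb)
next
  case False
  have "card A \<le> card (insert b B)"
    using assms(2,3) False by simp
  then obtain chi where chi: "inj_on chi A" "chi ` A \<subseteq> insert b B"
    and opt: "subset_dist d M A (insert b B) = inj_cost d M A (insert b B) chi"
    using subset_dist_attained assms(1,2) by (metis finite_insert)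
  obtain chi' where "inj_on chi' A" "chi' ` A \<subseteq> B"
    and "inj_cost d M A B chi' \<le> inj_cost d M A (insert b B) chi"
    using ex_inj_cost_le_insert[where d = d and M = M, OF assms(1-3) False assms(4,5) chi] by blast
  then show ?thesis
    using subset_dist_le_inj_cost[OF assms(1-3), of chi' d M] opt by linarith
qed

theorem lemma2p3:
  fixes X :: "'a set" and d :: "'a \<Rightarrow> 'a \<Rightarrow> real" and M :: "'a \<Rightarrow> real"
    and X1 X2 :: "'a set" and b :: 'a
  assumes "Metric_space X d"
    and "Metric_space.mbounded X d X"
    and "\<And>x y z. x \<in> X \<Longrightarrow> y \<in> X \<Longrightarrow> z \<in> X \<Longrightarrow> d x y \<le> M x \<and> M x \<le> d x z + M z"
    and "finite X1" and "X1 \<subseteq> X" and "finite X2" and "X2 \<subseteq> X"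
    and "card X1 \<le> card X2"
    and "b \<in> X"
  shows "subset_dist d M X1 X2 \<le> subset_dist d M X1 (X2 \<union> {b})"
proof -
  interpret Metric_space X d by fact
  have "M b \<ge> 0"
    using assms(3)[OF assms(9) assms(9) assms(9)] assms(9) by simp
  moreover have "d a y \<le> d a b + M y" if "a \<in> X1" "y \<in> X2" for a y
  proof -
    have "a \<in> X" "y \<in> X"
      using that assms(5,7) by auto
    then have "d a y \<le> d a b + d y b"
      using triangle[of a b y] commute[of b y] assms(9) by simp
    also have "\<dots> \<le> d a b + M y"
      using assms(3) \<open>y \<in> X\<close> assms(9) by fastforce
    finally show ?thesis .
  qed
  ultimately show ?thesis
    using subset_dist_le_insert[OF assms(4,6,8)] by simp
qed

end
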